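(* Consider the system $x_{k+1}=Ax_k+Bu_k$ with constraint sets $\mathcal{X}=\{x\mid C_xx\le c_x\}$, $\mathcal{U}=\{u\mid C_uu\le c_u\}$ (with $0\in\operatorname{int}\mathcal{X}$, $0\in\operatorname{int}\mathcal{U}$) and equilibrium at the origin, controlled by a ReLU network $u_k=\mathcal{N}(x_k;\theta)$ with $L$ hidden layers, i.e. $x_{k+1}=f_{\text{cl}}(x_k)=Ax_k+B\mathcal{N}(x_k;\theta)$. Let $\Gamma_{\text{eq}}=G(0)$, $\mathcal{R}_{\text{eq}}=\{x\mid G(x)=\Gamma_{\text{eq}}\}$, and let $W_{\Gamma_{\text{eq}},L},b_{\Gamma_{\text{eq}},L}$ be as defined in the context. Suppose $W_{L+1}b_{\Gamma_{\text{eq}},L}+b_{L+1}=0$ and every eigenvalue of $A+BW_{L+1}W_{\Gamma_{\text{eq}},L}$ has modulus strictly less than $1$. Let $\mathcal{R}_K$ be the set of initial states $x_0$ for which the linear feedback $u_k=W_{L+1}W_{\Gamma_{\text{eq}},L}x_k$ applied to the system produces a trajectory that satisfies $x_k\in\mathcal{X}$ and $u_k\in\mathcal{U}$ for all $k\ge0$ and converges to the origin. Let $\mathcal{R}_{\text{as}}$ be an admissible control-invariant set for the closed loop with $\mathcal{R}_{\text{as}}\subseteq\mathcal{R}_{\text{eq}}\cap\mathcal{R}_K$. Then the neural network controller is asymptotically stabilizing for all $x\in\mathcal{R}_{\text{as}}$: every closed-loop trajectory starting in $\mathcal{R}_{\text{as}}$ satisfies the constraints and converges asymptotically to the origin.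
   Context: A ReLU network is $\mathcal{N}(x;\theta)=W_{L+1}\xi_L+b_{L+1}$ with $\xi_0=x$, $\xi_l=\max(0,W_l\xi_{l-1}+b_l)$ elementwise for $l=1,\dots,L$, where $W_l\in\mathbb{R}^{n_l\times n_{l-1}}$ ($n_0=n_x$), $b_l\in\mathbb{R}^{n_l}$, $W_{L+1}\in\mathbb{R}^{n_u\times n_L}$, $b_{L+1}\in\mathbb{R}^{n_u}$. The activation pattern of $x$ is $G(x)=(\gamma_1(x),\dots,\gamma_L(x))$ with $\gamma_l(x)\in\{0,1\}^{n_l}$, $\gamma_l(x)^{(i)}=1$ iff $W_l^{(i)}\xi_{l-1}+b_l^{(i)}\ge0$. For a fixed pattern $\Gamma=(\gamma_1,\dots,\gamma_L)$ define $\eta_0=x$, $\eta_l=\gamma_l\odot(W_l\eta_{l-1}+b_l)$ ($\odot$ elementwise product); then $\eta_L=W_{\Gamma,L}x+b_{\Gamma,L}$ for a matrix $W_{\Gamma,L}\in\mathbb{R}^{n_L\times n_x}$ and vector $b_{\Gamma,L}\in\mathbb{R}^{n_L}$ determined by $\Gamma$ and $\theta$. In particular, for $x\in\mathcal{R}_{\text{eq}}$, $\mathcal{N}(x;\theta)=W_{L+1}(W_{\Gamma_{\text{eq}},L}x+b_{\Gamma_{\text{eq}},L})+b_{L+1}$. A set $\mathcal{C}$ is an admissible control-invariant set for the closed loop if $\mathcal{N}(x;\theta)\in\mathcal{U}$ for all $x\in\mathcal{C}$ and $f_{\text{cl}}(\mathcal{C})\subseteq\mathcal{C}$. *)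

theory Defs
  imports "Jordan_Normal_Form.Char_Poly"
begin

text \<open>A ReLU network with L hidden layers is given by a list of hidden layers
[(W_1,b_1),...,(W_L,b_L)] and an output layer (W_{L+1}, b_{L+1}).
Activation patterns are lists of bool vectors (True = active, i.e. the paper's 1).\<close>

definition relu :: "real vec \<Rightarrow> real vec" where
  "relu z = map_vec (\<lambda>t. max 0 t) z"

fun hidden_out :: "(real mat \<times> real vec) list \<Rightarrow> real vec \<Rightarrow> real vec" where
  "hidden_out [] x = x"
| "hidden_out ((W, b) # ls) x = hidden_out ls (relu (W *\<^sub>v x + b))"

definition relu_net :: "(real mat \<times> real vec) list \<Rightarrow> real mat \<Rightarrow> real vec \<Rightarrow> real vec \<Rightarrow> real vec" where
  "relu_net ls WL1 bL1 x = WL1 *\<^sub>v hidden_out ls x + bL1"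

fun act_pattern :: "(real mat \<times> real vec) list \<Rightarrow> real vec \<Rightarrow> bool vec list" where
  "act_pattern [] x = []"
| "act_pattern ((W, b) # ls) x =
     (let z = W *\<^sub>v x + b in vec (dim_vec z) (\<lambda>i. z $ i \<ge> 0) # act_pattern ls (relu z))"

text \<open>diagonal 0/1 matrix of a pattern vector gamma (so that gamma \<odot> z = pat_diag gamma *v z)\<close>
definition pat_diag :: "bool vec \<Rightarrow> real mat" where
  "pat_diag g = mat (dim_vec g) (dim_vec g) (\<lambda>(i, j). if i = j \<and> g $ i then 1 else 0)"

text \<open>(W_{Gamma,l}, b_{Gamma,l}) for a fixed pattern, from
eta_0 = x, eta_l = gamma_l \<odot> (W_l eta_{l-1} + b_l); the recursion processes
the layers from the first one, starting with (W_{Gamma,0}, b_{Gamma,0}) = (I, 0).\<close>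
fun pat_affine_aux :: "(real mat \<times> real vec) list \<Rightarrow> bool vec list \<Rightarrow> real mat \<times> real vec \<Rightarrow> real mat \<times> real vec" where
  "pat_affine_aux ((W, b) # ls) (g # gs) (M, c) =
     pat_affine_aux ls gs (pat_diag g * (W * M), pat_diag g *\<^sub>v (W *\<^sub>v c + b))"
| "pat_affine_aux _ _ Mc = Mc"

definition pat_affine :: "nat \<Rightarrow> (real mat \<times> real vec) list \<Rightarrow> bool vec list \<Rightarrow> real mat \<times> real vec" where
  "pat_affine nx ls G = pat_affine_aux ls G (1\<^sub>m nx, 0\<^sub>v nx)"

definition polyhedron :: "nat \<Rightarrow> real mat \<Rightarrow> real vec \<Rightarrow> real vec set" where
  "polyhedron n C c = {v. dim_vec v = n \<and> C *\<^sub>v v \<le> c}"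

definition zero_interior :: "nat \<Rightarrow> real vec set \<Rightarrow> bool" where
  "zero_interior n S \<longleftrightarrow> (\<exists>e>0. \<forall>v. dim_vec v = n \<and> (\<Sum>i<n. (v $ i)\<^sup>2) < e\<^sup>2 \<longrightarrow> v \<in> S)"

text \<open>convergence of a sequence in R^n to the origin (componentwise = Euclidean)\<close>
definition conv_zero :: "nat \<Rightarrow> (nat \<Rightarrow> real vec) \<Rightarrow> bool" where
  "conv_zero n xs \<longleftrightarrow> (\<forall>i<n. (\<lambda>k. xs k $ i) \<longlonglongrightarrow> 0)"

definition closed_loop :: "real mat \<Rightarrow> real mat \<Rightarrow> (real mat \<times> real vec) list \<Rightarrow> real mat \<Rightarrow> real vec \<Rightarrow> real vec \<Rightarrow> real vec" where
  "closed_loop A B ls WL1 bL1 x = A *\<^sub>v x + B *\<^sub>v relu_net ls WL1 bL1 x"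

definition lin_region :: "nat \<Rightarrow> real mat \<Rightarrow> real mat \<Rightarrow> real mat \<Rightarrow> real vec set \<Rightarrow> real vec set \<Rightarrow> real vec set" where
  "lin_region nx A B K X U =
     {x0. dim_vec x0 = nx \<and>
        (let xs = (\<lambda>k. ((\<lambda>x. A *\<^sub>v x + B *\<^sub>v (K *\<^sub>v x)) ^^ k) x0) in
          (\<forall>k. xs k \<in> X \<and> K *\<^sub>v xs k \<in> U) \<and> conv_zero nx xs)}"

definition admissible_ci :: "(real vec \<Rightarrow> real vec) \<Rightarrow> (real vec \<Rightarrow> real vec) \<Rightarrow> real vec set \<Rightarrow> real vec set \<Rightarrow> bool" where
  "admissible_ci f ctrl U C \<longleftrightarrow> (\<forall>x\<in>C. ctrl x \<in> U) \<and> f ` C \<subseteq> C"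

fun layers_wf :: "nat \<Rightarrow> (real mat \<times> real vec) list \<Rightarrow> nat \<Rightarrow> bool" where
  "layers_wf n [] m = (m = n)"
| "layers_wf n ((W, b) # ls) m = (dim_col W = n \<and> dim_vec b = dim_row W \<and> layers_wf (dim_row W) ls m)"

definition net_wf :: "nat \<Rightarrow> nat \<Rightarrow> (real mat \<times> real vec) list \<Rightarrow> real mat \<Rightarrow> real vec \<Rightarrow> bool" where
  "net_wf nx nu ls WL1 bL1 \<longleftrightarrow> layers_wf nx ls (dim_col WL1) \<and> dim_row WL1 = nu \<and> dim_vec bL1 = nu"

end

theory Submission
  imports Defs
begin

text \<open>On R_eq every ReLU acts as the fixed 0/1 diagonal matrix given by the pattern of the
origin, so there the network is the affine map x \<mapsto> W_{L+1} (W_{Gamma_eq,L} x + b_{Gamma_eq,L}) + b_{L+1},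
which by the bias condition is the linear feedback K x with K = W_{L+1} W_{Gamma_eq,L}.
As R_as is invariant and contained in R_eq, closed-loop trajectories from R_as coincide with
those of x \<mapsto> A x + B K x, which satisfy the constraints and converge because R_as \<subseteq> R_K.\<close>

lemma funpow_in_invariant:
  assumes "f ` S \<subseteq> S" "x \<in> S"
  shows "(f ^^ k) x \<in> S"
  using assms by (induction k) auto

lemma funpow_eq_on_invariant:
  assumes "f ` S \<subseteq> S" "\<And>y. y \<in> S \<Longrightarrow> f y = g y" "x \<in> S"
  shows "(f ^^ k) x = (g ^^ k) x"
proof (induction k)
  case (Suc k)
  have "(f ^^ Suc k) x = f ((f ^^ k) x)" by simp
  also have "\<dots> = g ((f ^^ k) x)" using assms by (simp add: funpow_in_invariant)
  finally show ?case using Suc.IH by simp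
qed simp

lemma pat_diag_carrier: "pat_diag g \<in> carrier_mat (dim_vec g) (dim_vec g)"
  by (simp add: pat_diag_def)

lemma relu_eq_pat_diag_mult_vec: "relu z = pat_diag (vec (dim_vec z) (\<lambda>i. z $ i \<ge> 0)) *\<^sub>v z"
proof (rule eq_vecI)
  fix i assume "i < dim_vec (pat_diag (vec (dim_vec z) (\<lambda>i. z $ i \<ge> 0)) *\<^sub>v z)"
  then have i: "i < dim_vec z" by (simp add: pat_diag_def)
  have "(pat_diag (vec (dim_vec z) (\<lambda>i. z $ i \<ge> 0)) *\<^sub>v z) $ i
      = (\<Sum>j<dim_vec z. (if i = j \<and> z $ i \<ge> 0 then 1 else 0) * z $ j)"
    using i by (simp add: pat_diag_def scalar_prod_def row_def atLeast0LessThan)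
  also have "\<dots> = (\<Sum>j<dim_vec z. if j = i then (if z $ i \<ge> 0 then z $ i else 0) else 0)"
    by (rule sum.cong) auto
  also have "\<dots> = max 0 (z $ i)" using i by (simp add: max_def)
  finally show "relu z $ i = (pat_diag (vec (dim_vec z) (\<lambda>i. z $ i \<ge> 0)) *\<^sub>v z) $ i"
    using i by (simp add: relu_def)
qed (simp add: relu_def pat_diag_def)

lemma pat_affine_aux_act_pattern_carrier:
  assumes "layers_wf n ls m" "M \<in> carrier_mat n nx" "c \<in> carrier_vec n"
  shows "fst (pat_affine_aux ls (act_pattern ls y) (M, c)) \<in> carrier_mat m nx
       \<and> snd (pat_affine_aux ls (act_pattern ls y) (M, c)) \<in> carrier_vec m"
  using assms
proof (induction ls arbitrary: n M c y)
  case (Cons l ls)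
  obtain W b where l: "l = (W, b)" by force
  define g where "g = vec (dim_vec b) (\<lambda>i. (W *\<^sub>v y + b) $ i \<ge> 0)"
  have dims: "dim_col W = n" "dim_vec b = dim_row W" and wf: "layers_wf (dim_row W) ls m"
    using Cons.prems(1) unfolding l by simp_all
  have W: "W \<in> carrier_mat (dim_row W) n" and b: "b \<in> carrier_vec (dim_row W)"
    using dims by (auto intro!: carrier_matI carrier_vecI)
  have P: "pat_diag g \<in> carrier_mat (dim_row W) (dim_row W)"
    using pat_diag_carrier[of g] dims by (simp add: g_def)
  have "pat_diag g * (W * M) \<in> carrier_mat (dim_row W) nx"
    using P W Cons.prems(2) by (meson mult_carrier_mat)
  moreover have "pat_diag g *\<^sub>v (W *\<^sub>v c + b) \<in> carrier_vec (dim_row W)"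
    using P W b Cons.prems(3) by (meson add_carrier_vec mult_mat_vec_carrier)
  moreover have "act_pattern ((W, b) # ls) y = g # act_pattern ls (relu (W *\<^sub>v y + b))"
    by (simp add: g_def Let_def)
  ultimately show ?case
    using Cons.IH[OF wf] by (simp add: l)
qed simp

text \<open>Stated for inputs M x + c rather than x so that the induction hypothesis applies to the
input of the next layer.\<close>

lemma hidden_out_eq_pat_affine_aux:
  assumes "layers_wf n ls m" "M \<in> carrier_mat n nx" "c \<in> carrier_vec n" "x \<in> carrier_vec nx"
  shows "hidden_out ls (M *\<^sub>v x + c) =
           fst (pat_affine_aux ls (act_pattern ls (M *\<^sub>v x + c)) (M, c)) *\<^sub>v x
         + snd (pat_affine_aux ls (act_pattern ls (M *\<^sub>v x + c)) (M, c))"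
  using assms
proof (induction ls arbitrary: n M c)
  case (Cons l ls)
  obtain W b where l: "l = (W, b)" by force
  define z where "z = W *\<^sub>v (M *\<^sub>v x + c) + b"
  define g where "g = vec (dim_vec z) (\<lambda>i. z $ i \<ge> 0)"
  have dims: "dim_col W = n" "dim_vec b = dim_row W" and wf: "layers_wf (dim_row W) ls m"
    using Cons.prems(1) unfolding l by simp_all
  have W: "W \<in> carrier_mat (dim_row W) n" and b: "b \<in> carrier_vec (dim_row W)"
    using dims by (auto intro!: carrier_matI carrier_vecI)
  have P: "pat_diag g \<in> carrier_mat (dim_row W) (dim_row W)"
    using pat_diag_carrier[of g] dims by (simp add: g_def z_def)
  define M' where "M' = pat_diag g * (W * M)"
  define c' where "c' = pat_diag g *\<^sub>v (W *\<^sub>v c + b)"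
  have M': "M' \<in> carrier_mat (dim_row W) nx"
    unfolding M'_def using P W Cons.prems(2) by (meson mult_carrier_mat)
  have c': "c' \<in> carrier_vec (dim_row W)"
    unfolding c'_def using P W b Cons.prems(3) by (meson add_carrier_vec mult_mat_vec_carrier)
  have Mx: "M *\<^sub>v x \<in> carrier_vec n" and Wc: "W *\<^sub>v c \<in> carrier_vec (dim_row W)"
    using W Cons.prems(2-4) by (meson mult_mat_vec_carrier)+
  have WMx: "W *\<^sub>v (M *\<^sub>v x) \<in> carrier_vec (dim_row W)"
    using W Mx by (rule mult_mat_vec_carrier)
  have z_eq: "z = W *\<^sub>v (M *\<^sub>v x) + (W *\<^sub>v c + b)"
    unfolding z_def mult_add_distrib_mat_vec[OF W Mx Cons.prems(3)] assoc_add_vec[OF WMx Wc b] ..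
  have "relu z = pat_diag g *\<^sub>v z"
    unfolding g_def by (rule relu_eq_pat_diag_mult_vec)
  also have "\<dots> = pat_diag g *\<^sub>v (W *\<^sub>v (M *\<^sub>v x) + (W *\<^sub>v c + b))"
    unfolding z_eq ..
  also have "\<dots> = M' *\<^sub>v x + c'"
    unfolding M'_def c'_def mult_add_distrib_mat_vec[OF P WMx add_carrier_vec[OF Wc b]]
      assoc_mult_mat_vec[OF P mult_carrier_mat[OF W Cons.prems(2)] Cons.prems(4)]
      assoc_mult_mat_vec[OF W Cons.prems(2,4)] ..
  finally have relu_z: "relu z = M' *\<^sub>v x + c'" .
  have "act_pattern ((W, b) # ls) (M *\<^sub>v x + c) = g # act_pattern ls (relu z)"
    and "hidden_out ((W, b) # ls) (M *\<^sub>v x + c) = hidden_out ls (relu z)"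
    by (simp_all add: Let_def z_def g_def)
  then show ?case
    using Cons.IH[OF wf M' c' Cons.prems(4)] by (simp add: l relu_z M'_def c'_def)
qed simp

lemma hidden_out_eq_pat_affine:
  assumes "layers_wf nx ls m" "x \<in> carrier_vec nx"
  shows "hidden_out ls x = fst (pat_affine nx ls (act_pattern ls x)) *\<^sub>v x
                         + snd (pat_affine nx ls (act_pattern ls x))"
  using hidden_out_eq_pat_affine_aux[OF assms(1) one_carrier_mat zero_carrier_vec assms(2)]
  unfolding pat_affine_def one_mult_mat_vec[OF assms(2)] right_zero_vec[OF assms(2)] .

lemma pat_affine_act_pattern_carrier:
  assumes "layers_wf nx ls m"
  shows "fst (pat_affine nx ls (act_pattern ls y)) \<in> carrier_mat m nx"
    and "snd (pat_affine nx ls (act_pattern ls y)) \<in> carrier_vec m"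
  using pat_affine_aux_act_pattern_carrier[OF assms one_carrier_mat zero_carrier_vec]
  by (simp_all add: pat_affine_def)

lemma relu_net_linear_on_pattern:
  assumes net: "net_wf nx nu ls WL1 bL1" and x: "x \<in> carrier_vec nx"
    and pattern: "act_pattern ls x = G"
    and bias: "WL1 *\<^sub>v snd (pat_affine nx ls G) + bL1 = 0\<^sub>v nu"
  shows "relu_net ls WL1 bL1 x = (WL1 * fst (pat_affine nx ls G)) *\<^sub>v x"
proof -
  have wf: "layers_wf nx ls (dim_col WL1)" and WL1: "WL1 \<in> carrier_mat nu (dim_col WL1)"
    and bL1: "bL1 \<in> carrier_vec nu"
    using net by (auto simp: net_wf_def intro!: carrier_matI carrier_vecI)
  note W = pat_affine_act_pattern_carrier[OF wf, of x, unfolded pattern]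
  have Wx: "fst (pat_affine nx ls G) *\<^sub>v x \<in> carrier_vec (dim_col WL1)"
    using W(1) x by (rule mult_mat_vec_carrier)
  have "relu_net ls WL1 bL1 x = WL1 *\<^sub>v (fst (pat_affine nx ls G) *\<^sub>v x)
                              + WL1 *\<^sub>v snd (pat_affine nx ls G) + bL1"
    unfolding relu_net_def hidden_out_eq_pat_affine[OF wf x] pattern
      mult_add_distrib_mat_vec[OF WL1 Wx W(2)] ..
  also have "\<dots> = WL1 *\<^sub>v (fst (pat_affine nx ls G) *\<^sub>v x)"
    using assoc_add_vec[OF mult_mat_vec_carrier[OF WL1 Wx] mult_mat_vec_carrier[OF WL1 W(2)] bL1]
      mult_mat_vec_carrier[OF WL1 Wx] by (simp add: bias)
  also have "\<dots> = (WL1 * fst (pat_affine nx ls G)) *\<^sub>v x"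
    by (rule assoc_mult_mat_vec[OF WL1 W(1) x, symmetric])
  finally show ?thesis .
qed

theorem lemma2:
  fixes nx nu :: nat
    and A B Cx Cu :: "real mat" and cx cu :: "real vec"
    and ls :: "(real mat \<times> real vec) list" and WL1 :: "real mat" and bL1 :: "real vec"
    and R_as :: "real vec set"
  assumes A_dim: "A \<in> carrier_mat nx nx"
    and B_dim: "B \<in> carrier_mat nx nu"
    and Cx_dim: "dim_col Cx = nx" and cx_dim: "dim_vec cx = dim_row Cx"
    and Cu_dim: "dim_col Cu = nu" and cu_dim: "dim_vec cu = dim_row Cu"
    and X_int: "zero_interior nx (polyhedron nx Cx cx)"
    and U_int: "zero_interior nu (polyhedron nu Cu cu)"
    and net: "net_wf nx nu ls WL1 bL1"
    and eq_bias: "WL1 *\<^sub>v snd (pat_affine nx ls (act_pattern ls (0\<^sub>v nx))) + bL1 = 0\<^sub>v nu"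
    and schur: "\<And>ev. eigenvalue (map_mat complex_of_real
                   (A + B * (WL1 * fst (pat_affine nx ls (act_pattern ls (0\<^sub>v nx)))))) ev
                 \<Longrightarrow> cmod ev < 1"
    and inv: "admissible_ci (closed_loop A B ls WL1 bL1) (relu_net ls WL1 bL1)
                (polyhedron nu Cu cu) R_as"
    and sub: "R_as \<subseteq> {x. dim_vec x = nx \<and> act_pattern ls x = act_pattern ls (0\<^sub>v nx)}
                 \<inter> lin_region nx A B (WL1 * fst (pat_affine nx ls (act_pattern ls (0\<^sub>v nx))))
                     (polyhedron nx Cx cx) (polyhedron nu Cu cu)"
  shows "\<forall>x0\<in>R_as. \<forall>k.
           ((closed_loop A B ls WL1 bL1 ^^ k) x0) \<in> polyhedron nx Cx cx
         \<and> relu_net ls WL1 bL1 ((closed_loop A B ls WL1 bL1 ^^ k) x0) \<in> polyhedron nu Cu cu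
         \<and> conv_zero nx (\<lambda>k. (closed_loop A B ls WL1 bL1 ^^ k) x0)"
proof (intro ballI)
  fix x0 assume x0: "x0 \<in> R_as"
  define K where "K = WL1 * fst (pat_affine nx ls (act_pattern ls (0\<^sub>v nx)))"
  define f where "f = closed_loop A B ls WL1 bL1"
  define lin where "lin = (\<lambda>x. A *\<^sub>v x + B *\<^sub>v (K *\<^sub>v x))"
  have invariant: "f ` R_as \<subseteq> R_as"
    and input: "\<And>x. x \<in> R_as \<Longrightarrow> relu_net ls WL1 bL1 x \<in> polyhedron nu Cu cu"
    using inv unfolding admissible_ci_def f_def by blast+
  have "f x = lin x" if "x \<in> R_as" for x
  proof -
    have "dim_vec x = nx" and pattern: "act_pattern ls x = act_pattern ls (0\<^sub>v nx)"
      using sub that by blast+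
    then have "relu_net ls WL1 bL1 x = K *\<^sub>v x"
      unfolding K_def by (intro relu_net_linear_on_pattern[OF net _ pattern eq_bias] carrier_vecI)
    then show ?thesis unfolding f_def lin_def closed_loop_def by simp
  qed
  then have trajectory: "(f ^^ k) x0 = (lin ^^ k) x0" for k
    using funpow_eq_on_invariant[OF invariant _ x0] by blast
  have "x0 \<in> lin_region nx A B K (polyhedron nx Cx cx) (polyhedron nu Cu cu)"
    using sub x0 unfolding K_def by blast
  then have "(\<forall>k. (f ^^ k) x0 \<in> polyhedron nx Cx cx) \<and> conv_zero nx (\<lambda>k. (f ^^ k) x0)"
    unfolding lin_region_def Let_def trajectory lin_def by blast
  then show "\<forall>k. (f ^^ k) x0 \<in> polyhedron nx Cx cx
              \<and> relu_net ls WL1 bL1 ((f ^^ k) x0) \<in> polyhedron nu Cu cu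
              \<and> conv_zero nx (\<lambda>k. (f ^^ k) x0)"
    using input funpow_in_invariant[OF invariant x0] by blast
qed

end
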